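(* For $i\ge 1$ let $P_i$ denote a rectangle of dimensions $\frac{1}{i}\times\frac{1}{i+1}$ (so $\sum_{i=1}^{\infty}\frac{1}{i(i+1)}=1$). Let $n\ge 1000$ be an integer and suppose that the rectangles $P_1,\dots,P_{n-1}$ can be packed into the unit square. Then all the rectangles $P_1,P_2,P_3,\dots$ can be packed into the square of side length $1+\frac{1}{n}$. Moreover, the region actually used by this packing (the unit square together with the additional strips) has area less than $1+\frac{2}{n}\left(\ln 2+\frac{1}{2n}\right)$.
   Context: A packing of rectangles into a container means placing the rectangles (translated, and possibly rotated by $90^\circ$) inside the container so that they have pairwise disjoint interiors. *)

theory Defs
  imports "HOL-Analysis.Analysis"
begin

definition placed_rect :: "real \<Rightarrow> real \<Rightarrow> real \<times> real \<Rightarrow> bool \<Rightarrow> (real \<times> real) set" where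
  "placed_rect w h p r = (if r then cbox p (p + (h, w)) else cbox p (p + (w, h)))"

definition P_rect :: "nat \<Rightarrow> real \<times> real \<Rightarrow> bool \<Rightarrow> (real \<times> real) set" where
  "P_rect i p r = placed_rect (1 / real i) (1 / real (i + 1)) p r"

definition packs :: "nat set \<Rightarrow> (real \<times> real) set \<Rightarrow> (nat \<Rightarrow> real \<times> real) \<Rightarrow> (nat \<Rightarrow> bool) \<Rightarrow> bool" where
  "packs I C pos rot \<longleftrightarrow>
     (\<forall>i\<in>I. P_rect i (pos i) (rot i) \<subseteq> C) \<and>
     (\<forall>i\<in>I. \<forall>j\<in>I. i \<noteq> j \<longrightarrow>
        interior (P_rect i (pos i) (rot i)) \<inter> interior (P_rect j (pos j) (rot j)) = {})"

definition packable :: "nat set \<Rightarrow> (real \<times> real) set \<Rightarrow> bool" where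
  "packable I C \<longleftrightarrow> (\<exists>pos rot. packs I C pos rot)"

definition square :: "real \<Rightarrow> (real \<times> real) set" where
  "square s = cbox (0, 0) (s, s)"

end

theory Submission
  imports Defs "HOL-Library.Discrete_Functions"
begin

text \<open>Shelf packing. The rectangles P_1, ..., P_(n-1) keep their places in the unit square.
  For k >= 0 the rectangles P_i with 2^k n <= i < 2^(k+1) n form shelf k: they are put side by
  side along their short sides, so the shelf is at most 1/(2^k n) thick and, comparing the sum
  of 1/(i+1) with a logarithm, at most ln 2 long. Shelf 0 stands upright in the strip
  [1, 1 + 1/n] x [0, ln 2] to the right of the square; the shelves k >= 1 lie rotated on top of
  each other in the strip [0, ln 2] x [1, 1 + 1/n], whose height 1/n is the sum of their
  thicknesses 1/(2^k n). The two strips have total area 2 ln 2 / n.\<close>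

lemma cbox_Pair_subset:
  "a1 \<le> c1 \<Longrightarrow> d1 \<le> b1 \<Longrightarrow> a2 \<le> c2 \<Longrightarrow> d2 \<le> b2 \<Longrightarrow>
   cbox (c1::real, c2::real) (d1, d2) \<subseteq> cbox (a1, a2) (b1, b2)"
  by (auto simp: cbox_Pair_eq)

lemma box_Pair_disjoint:
  "b1 \<le> c1 \<or> d1 \<le> a1 \<or> b2 \<le> c2 \<or> d2 \<le> a2 \<Longrightarrow>
   box (a1::real, a2::real) (b1, b2) \<inter> box (c1, c2) (d1, d2) = {}"
  by (auto simp: mem_box Basis_prod_def)

lemma measure_cbox_Pair:
  "a1 \<le> b1 \<Longrightarrow> a2 \<le> b2 \<Longrightarrow>
   measure lebesgue (cbox (a1::real, a2::real) (b1, b2)) = (b1 - a1) * (b2 - a2)"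
  by (simp add: measure_completion content_Pair)

lemma harm_diff_le_ln:
  assumes "0 < a" "a \<le> b"
  shows "harm b - harm a \<le> ln (real b / real a)"
  using assms(2)
proof (induction b rule: dec_induct)
  case base
  then show ?case by simp
next
  case (step b)
  have b: "0 < b" using assms step by simp
  have "harm (Suc b) - harm a = harm b - harm a + 1 / (real b + 1)"
    by (simp add: harm_Suc inverse_eq_divide)
  also have "1 / (real b + 1) \<le> ln ((real b + 1) / real b)"
    using ln_add1_ge[of "1 / real b"] b by (simp add: field_simps)
  also note step.IH
  also have "ln (real b / real a) + ln ((real b + 1) / real b) = ln (real (Suc b) / real a)"
    using b assms by (simp add: ln_div)
  finally show ?case by simp
qed

lemma harm_double_diff_le_ln2: "0 < m \<Longrightarrow> harm (2 * m) - harm m \<le> (ln 2 :: real)"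
  using harm_diff_le_ln[of m "2 * m"] by simp

lemma packs_mono: "packs I C pos rot \<Longrightarrow> C \<subseteq> D \<Longrightarrow> packs I D pos rot"
  unfolding packs_def by blast

lemma packs_Un:
  assumes I: "packs I C pos rot" and J: "packs J D pos' rot'"
    and "I \<inter> J = {}" and CD: "interior C \<inter> D = {}"
  shows "packs (I \<union> J) (C \<union> D)
           (\<lambda>i. if i \<in> I then pos i else pos' i) (\<lambda>i. if i \<in> I then rot i else rot' i)"
    (is "packs _ _ ?pos ?rot")
proof -
  define R where "R i = P_rect i (?pos i) (?rot i)" for i
  have R_I: "R i = P_rect i (pos i) (rot i)" if "i \<in> I" for i
    using that by (simp add: R_def)
  have R_J: "R j = P_rect j (pos' j) (rot' j)" if "j \<in> J" for j
    using that \<open>I \<inter> J = {}\<close> by (auto simp: R_def)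
  have sub_C: "R i \<subseteq> C" if "i \<in> I" for i
    using I that unfolding packs_def R_I[OF that] by blast
  have sub_D: "R j \<subseteq> D" if "j \<in> J" for j
    using J that unfolding packs_def R_J[OF that] by blast
  have cross: "interior (R i) \<inter> interior (R j) = {}" if "i \<in> I" "j \<in> J" for i j
  proof -
    have "interior (R i) \<subseteq> interior C"
      using sub_C[OF that(1)] by (rule interior_mono)
    moreover have "interior (R j) \<subseteq> D"
      using sub_D[OF that(2)] interior_subset by blast
    ultimately show ?thesis using CD by blast
  qed
  show ?thesis
    unfolding packs_def R_def[symmetric]
  proof (intro conjI ballI impI)
    fix i assume "i \<in> I \<union> J"
    then show "R i \<subseteq> C \<union> D"
      using sub_C sub_D by blast
  next
    fix i j assume "i \<in> I \<union> J" "j \<in> I \<union> J" "i \<noteq> j"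
    then consider "i \<in> I" "j \<in> I" | "i \<in> I" "j \<in> J" | "j \<in> I" "i \<in> J" | "i \<in> J" "j \<in> J"
      by blast
    then show "interior (R i) \<inter> interior (R j) = {}"
    proof cases
      case 1
      then show ?thesis using I \<open>i \<noteq> j\<close> unfolding packs_def R_I[OF 1(1)] R_I[OF 1(2)] by blast
    next
      case 2
      then show ?thesis by (rule cross)
    next
      case 3
      then show ?thesis using cross by blast
    next
      case 4
      then show ?thesis using J \<open>i \<noteq> j\<close> unfolding packs_def R_J[OF 4(1)] R_J[OF 4(2)] by blast
    qed
  qed
qed

definition shelf :: "nat \<Rightarrow> nat \<Rightarrow> nat" where
  "shelf n i = floor_log (i div n)"

lemma shelf_bounds:
  assumes "0 < n" "n \<le> i"
  shows "2 ^ shelf n i * n \<le> i" "i < 2 * (2 ^ shelf n i * n)"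
proof -
  have "0 < i div n" using assms by (simp add: div_greater_zero_iff)
  then have "2 ^ shelf n i \<le> i div n"
    unfolding shelf_def by (rule floor_log_exp2_le)
  then have "2 ^ shelf n i * n \<le> i div n * n" by simp
  also have "\<dots> \<le> i" by simp
  finally show "2 ^ shelf n i * n \<le> i" .
  have "i div n < 2 * 2 ^ shelf n i"
    unfolding shelf_def by (rule floor_log_exp2_gt)
  then show "i < 2 * (2 ^ shelf n i * n)"
    using assms(1) by (simp add: div_less_iff_less_mult mult.assoc)
qed

definition shelf_offset :: "nat \<Rightarrow> nat \<Rightarrow> real" where
  "shelf_offset n i = harm i - harm (2 ^ shelf n i * n)"

lemma shelf_offset_nonneg: "0 < n \<Longrightarrow> n \<le> i \<Longrightarrow> 0 \<le> shelf_offset n i"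
  using harm_mono[OF shelf_bounds(1), where 'a = real] by (simp add: shelf_offset_def)

lemma shelf_offset_end_le_ln2:
  assumes "0 < n" "n \<le> i"
  shows "shelf_offset n i + 1 / real (i + 1) \<le> ln 2"
proof -
  define m where "m = 2 ^ shelf n i * n"
  have "0 < m" "Suc i \<le> 2 * m"
    using assms shelf_bounds(2)[OF assms] by (simp_all add: m_def)
  have "shelf_offset n i + 1 / real (i + 1) = harm (Suc i) - harm m"
    by (simp add: shelf_offset_def m_def harm_Suc inverse_eq_divide)
  also have "\<dots> \<le> harm (2 * m) - harm m"
    using harm_mono[OF \<open>Suc i \<le> 2 * m\<close>] by simp
  also have "\<dots> \<le> ln 2"
    using \<open>0 < m\<close> by (rule harm_double_diff_le_ln2)
  finally show ?thesis .
qed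

lemma shelf_offset_end_le:
  "shelf n i = shelf n j \<Longrightarrow> i < j \<Longrightarrow> shelf_offset n i + 1 / real (i + 1) \<le> shelf_offset n j"
  using harm_mono[of "Suc i" j, where 'a = real]
  by (simp add: shelf_offset_def harm_Suc inverse_eq_divide)

text \<open>For k >= 1, shelf k occupies the heights [1 + 1/n - 2/(2^k n), 1 + 1/n - 1/(2^k n)];
  these bands tile [1, 1 + 1/n].\<close>

definition shelf_base :: "nat \<Rightarrow> nat \<Rightarrow> real" where
  "shelf_base n k = 1 + 1 / real n - 2 / (2 ^ k * real n)"

lemma one_le_shelf_base:
  assumes "0 < n" "0 < k"
  shows "1 \<le> shelf_base n k"
proof -
  have "(2::real) ^ 1 \<le> 2 ^ k" using assms(2) by (intro power_increasing) auto
  then have "2 / (2 ^ k * real n) \<le> 2 / (2 * real n)"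
    using assms(1) by (intro divide_left_mono mult_right_mono) auto
  then show ?thesis by (simp add: shelf_base_def)
qed

lemma shelf_top_le_shelf_base:
  assumes "0 < n" "k < k'"
  shows "shelf_base n k + 1 / (2 ^ k * real n) \<le> shelf_base n k'"
proof -
  have "(2::real) ^ Suc k \<le> 2 ^ k'" using assms(2) by (intro power_increasing) auto
  then have "2 / (2 ^ k' * real n) \<le> 2 / (2 ^ Suc k * real n)"
    using assms(1) by (intro divide_left_mono mult_right_mono) auto
  also have "\<dots> = 1 / (2 ^ k * real n)" by simp
  finally show ?thesis unfolding shelf_base_def by linarith
qed

lemma shelf_top_le: "shelf_base n k + 1 / (2 ^ k * real n) \<le> 1 + 1 / real n"
  by (simp add: shelf_base_def)

definition right_strip :: "nat \<Rightarrow> (real \<times> real) set" where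
  "right_strip n = cbox (1, 0) (1 + 1 / real n, ln 2)"

definition top_strip :: "nat \<Rightarrow> (real \<times> real) set" where
  "top_strip n = cbox (0, 1) (ln 2, 1 + 1 / real n)"

definition shelf_box :: "nat \<Rightarrow> nat \<Rightarrow> (real \<times> real) set" where
  "shelf_box n k = (if k = 0 then right_strip n
     else cbox (0, shelf_base n k) (ln 2, shelf_base n k + 1 / (2 ^ k * real n)))"

lemma shelf_box_subset: "0 < n \<Longrightarrow> shelf_box n k \<subseteq> right_strip n \<union> top_strip n"
  using one_le_shelf_base[of n k] shelf_top_le[of n k]
  by (auto simp: shelf_box_def top_strip_def intro!: cbox_Pair_subset)

lemma shelf_boxes_disjoint:
  assumes "0 < n" "k < k'"
  shows "interior (shelf_box n k) \<inter> interior (shelf_box n k') = {}"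
proof (cases "k = 0")
  case True
  have "ln (2::real) \<le> shelf_base n k'"
    using one_le_shelf_base[of n k'] assms ln_2_less_1 by simp
  then show ?thesis
    using True assms by (simp add: shelf_box_def right_strip_def box_Pair_disjoint)
next
  case False
  then show ?thesis
    using shelf_top_le_shelf_base[OF assms] assms
    by (simp add: shelf_box_def box_Pair_disjoint)
qed

definition shelf_pos :: "nat \<Rightarrow> nat \<Rightarrow> real \<times> real" where
  "shelf_pos n i = (if shelf n i = 0 then (1, shelf_offset n i)
     else (shelf_offset n i, shelf_base n (shelf n i)))"

definition shelf_rot :: "nat \<Rightarrow> nat \<Rightarrow> bool" where
  "shelf_rot n i \<longleftrightarrow> shelf n i \<noteq> 0"

lemma P_rect_shelf_0:
  "shelf n i = 0 \<Longrightarrow> P_rect i (shelf_pos n i) (shelf_rot n i) =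
     cbox (1, shelf_offset n i) (1 + 1 / real i, shelf_offset n i + 1 / real (i + 1))"
  by (simp add: P_rect_def placed_rect_def shelf_pos_def shelf_rot_def add.commute)

lemma P_rect_shelf_nonzero:
  "shelf n i \<noteq> 0 \<Longrightarrow> P_rect i (shelf_pos n i) (shelf_rot n i) =
     cbox (shelf_offset n i, shelf_base n (shelf n i))
       (shelf_offset n i + 1 / real (i + 1), shelf_base n (shelf n i) + 1 / real i)"
  by (simp add: P_rect_def placed_rect_def shelf_pos_def shelf_rot_def)

lemma P_rect_shelf_subset:
  assumes "0 < n" "n \<le> i"
  shows "P_rect i (shelf_pos n i) (shelf_rot n i) \<subseteq> shelf_box n (shelf n i)"
proof -
  have "real (2 ^ shelf n i * n) \<le> real i"
    using shelf_bounds(1)[OF assms] by (rule of_nat_mono)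
  then have "1 / real i \<le> 1 / (2 ^ shelf n i * real n)"
    using assms by (intro divide_left_mono) simp_all
  then show ?thesis
    using shelf_offset_nonneg[OF assms] shelf_offset_end_le_ln2[OF assms]
    by (cases "shelf n i = 0")
      (simp_all add: P_rect_shelf_0 P_rect_shelf_nonzero shelf_box_def right_strip_def cbox_Pair_subset)
qed

lemma shelf_rects_disjoint:
  assumes "shelf n i = shelf n j" "i < j"
  shows "interior (P_rect i (shelf_pos n i) (shelf_rot n i)) \<inter>
         interior (P_rect j (shelf_pos n j) (shelf_rot n j)) = {}"
  using shelf_offset_end_le[OF assms] assms(1)
  by (cases "shelf n i = 0") (simp_all add: P_rect_shelf_0 P_rect_shelf_nonzero box_Pair_disjoint)

lemma packs_shelves:
  assumes "0 < n"
  shows "packs {n..} (right_strip n \<union> top_strip n) (shelf_pos n) (shelf_rot n)"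
  unfolding packs_def
proof (intro conjI ballI impI)
  fix i assume "i \<in> {n..}"
  then show "P_rect i (shelf_pos n i) (shelf_rot n i) \<subseteq> right_strip n \<union> top_strip n"
    using P_rect_shelf_subset shelf_box_subset assms by (meson atLeast_iff order_trans)
next
  fix i j assume "i \<in> {n..}" "j \<in> {n..}" "i \<noteq> j"
  show "interior (P_rect i (shelf_pos n i) (shelf_rot n i)) \<inter>
        interior (P_rect j (shelf_pos n j) (shelf_rot n j)) = {}"
  proof (cases "shelf n i = shelf n j")
    case True
    then show ?thesis
      using shelf_rects_disjoint[of n i j] shelf_rects_disjoint[of n j i] \<open>i \<noteq> j\<close>
      by (cases "i < j") (auto simp: Int_commute)
  next
    case False
    then have "interior (shelf_box n (shelf n i)) \<inter> interior (shelf_box n (shelf n j)) = {}"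
      using shelf_boxes_disjoint[OF assms] by (metis Int_commute linorder_neqE_nat)
    moreover have "P_rect l (shelf_pos n l) (shelf_rot n l) \<subseteq> shelf_box n (shelf n l)"
      if "l \<in> {i, j}" for l
      using P_rect_shelf_subset[OF assms] that \<open>i \<in> {n..}\<close> \<open>j \<in> {n..}\<close> by auto
    ultimately show ?thesis
      using interior_mono by blast
  qed
qed

lemma interior_square_disjoint_strips:
  "interior (square 1) \<inter> (right_strip n \<union> top_strip n) = {}"
  by (auto simp: square_def right_strip_def top_strip_def mem_box Basis_prod_def)

lemma strips_subset_square: "right_strip n \<union> top_strip n \<subseteq> square (1 + 1 / real n)"
proof -
  have "ln (2::real) \<le> 1 + 1 / real n"
    using ln_2_less_1 by (simp add: add_increasing2 less_imp_le)
  then show ?thesis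
    unfolding right_strip_def top_strip_def square_def by (auto intro!: cbox_Pair_subset)
qed

lemma measure_square_strips:
  "measure lebesgue (square 1 \<union> (right_strip n \<union> top_strip n)) \<le> 1 + 2 * ln 2 / real n"
proof -
  have "measure lebesgue (square 1 \<union> (right_strip n \<union> top_strip n))
        \<le> measure lebesgue (square 1) + (measure lebesgue (right_strip n) + measure lebesgue (top_strip n))"
    unfolding square_def right_strip_def top_strip_def
    by (intro order_trans[OF measure_Un_le] add_left_mono measure_Un_le) auto
  also have "\<dots> = 1 + 2 * ln 2 / real n"
    unfolding square_def right_strip_def top_strip_def
    by (subst (1 2 3) measure_cbox_Pair) auto
  finally show ?thesis .
qed

theorem theorem1:
  fixes n :: nat
  assumes "n \<ge> 1000"
    and "packable {1..n-1} (square 1)"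
  shows "\<exists>pos rot. packs {1..} (square (1 + 1 / real n)) pos rot \<and>
           (\<exists>S. finite S \<and> (\<forall>B\<in>S. \<exists>a b. B = cbox a b) \<and>
                \<Union>S \<subseteq> square (1 + 1 / real n) \<and>
                (\<forall>i\<ge>1. P_rect i (pos i) (rot i) \<subseteq> square 1 \<union> \<Union>S) \<and>
                measure lebesgue (square 1 \<union> \<Union>S)
                  < 1 + 2 / real n * (ln 2 + 1 / (2 * real n)))"
proof -
  have "0 < n" using assms(1) by simp
  obtain pos rot where old: "packs {1..n-1} (square 1) pos rot"
    using assms(2) unfolding packable_def by blast
  define S where "S = {right_strip n, top_strip n}"
  have "{1..n-1} \<inter> {n..} = {}" using \<open>0 < n\<close> by auto
  from packs_Un[OF old packs_shelves[OF \<open>0 < n\<close>] this interior_square_disjoint_strips]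
  have "\<exists>pos' rot'. packs ({1..n-1} \<union> {n..}) (square 1 \<union> \<Union>S) pos' rot'"
    unfolding S_def by auto
  moreover have "{1..n-1} \<union> {n..} = {1..}" using \<open>0 < n\<close> by auto
  ultimately obtain pos' rot' where packs: "packs {1..} (square 1 \<union> \<Union>S) pos' rot'"
    by auto
  have "square 1 \<subseteq> square (1 + 1 / real n)"
    unfolding square_def by (rule cbox_Pair_subset) auto
  then have used_in_square: "square 1 \<union> \<Union>S \<subseteq> square (1 + 1 / real n)"
    using strips_subset_square unfolding S_def by auto
  have "1 + 2 * ln 2 / real n < 1 + 2 / real n * (ln 2 + 1 / (2 * real n))"
    using \<open>0 < n\<close> by (simp add: field_simps)
  then have "measure lebesgue (square 1 \<union> \<Union>S) < 1 + 2 / real n * (ln 2 + 1 / (2 * real n))"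
    using measure_square_strips[of n] unfolding S_def by simp
  moreover have "\<forall>i\<ge>1. P_rect i (pos' i) (rot' i) \<subseteq> square 1 \<union> \<Union>S"
    using packs unfolding packs_def by simp
  moreover have "\<forall>B\<in>S. \<exists>a b. B = cbox a b" "finite S"
    unfolding S_def right_strip_def top_strip_def by auto
  ultimately show ?thesis
    using packs_mono[OF packs used_in_square] used_in_square by (intro exI conjI) auto
qed

end
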